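(* Let $\mathcal{G}^s$ be an SCG and let $\pi^f$ be a directed graph on $\mathcal{V}^f$ such that $\pi^f$ is acyclic, every edge $A_s\to B_{s'}$ of $\pi^f$ satisfies $s\le s'$, and the reduction of $\pi^f$ is a subgraph of $\mathcal{G}^s$. Then there exists an FTCG $\mathcal{G}^f\in\mathcal{C}(\mathcal{G}^s)$ which contains $\pi^f$ (as a subgraph).
   Context: Let $\mathcal{V}$ be a finite set of time series, $\mathcal{V}^f=\{X_s: X\in\mathcal{V},s\in\mathbb{Z}\}$. An FTCG is a DAG on $\mathcal{V}^f$ whose edges $X_s\to Z_{s'}$ satisfy $s\le s'$. The reduction of a directed graph $\mathcal{H}$ on $\mathcal{V}^f$ is the directed graph on $\mathcal{V}$ with an edge $X\to Z$ iff $\mathcal{H}$ has an edge $X_{s-\gamma}\to Z_s$ for some $s$ and $\gamma\ge0$. The SCG reduced from an FTCG is its reduction; an SCG is a graph reduced from some FTCG, and $\mathcal{C}(\mathcal{G}^s)$ is the class of FTCGs whose reduction equals $\mathcal{G}^s$. *)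

theory Defs
  imports Main
begin

(* A time-indexed vertex X_s is the pair (X, s) with s :: int.
   A directed graph on V^f is a set of edges H with endpoints in V \<times> UNIV. *)

definition graph_on_Vf :: "'v set \<Rightarrow> (('v \<times> int) \<times> ('v \<times> int)) set \<Rightarrow> bool" where
  "graph_on_Vf V H \<longleftrightarrow> H \<subseteq> (V \<times> UNIV) \<times> (V \<times> UNIV)"

definition time_respecting :: "(('v \<times> int) \<times> ('v \<times> int)) set \<Rightarrow> bool" where
  "time_respecting H \<longleftrightarrow> (\<forall>X s Z s'. ((X, s), (Z, s')) \<in> H \<longrightarrow> s \<le> s')"

definition is_FTCG :: "'v set \<Rightarrow> (('v \<times> int) \<times> ('v \<times> int)) set \<Rightarrow> bool" where
  "is_FTCG V H \<longleftrightarrow> graph_on_Vf V H \<and> acyclic H \<and> time_respecting H"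

definition reduction :: "(('v \<times> int) \<times> ('v \<times> int)) set \<Rightarrow> ('v \<times> 'v) set" where
  "reduction H = {(X, Z). \<exists>s \<gamma>. \<gamma> \<ge> 0 \<and> ((X, s - \<gamma>), (Z, s)) \<in> H}"

definition is_SCG :: "'v set \<Rightarrow> ('v \<times> 'v) set \<Rightarrow> bool" where
  "is_SCG V Gs \<longleftrightarrow> (\<exists>G. is_FTCG V G \<and> reduction G = Gs)"

definition FTCG_class :: "'v set \<Rightarrow> ('v \<times> 'v) set \<Rightarrow> (('v \<times> int) \<times> ('v \<times> int)) set set" where
  "FTCG_class V Gs = {G. is_FTCG V G \<and> reduction G = Gs}"

end

theory Submission
  imports Defs
begin

(* Realise every edge X \<rightarrow> Z of the summary graph once, as X_0 \<rightarrow> Z_1, and add these edges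
   to \<pi>. The new edges strictly increase time while those of \<pi> never decrease it, so a cycle of
   the union cannot use a new edge; hence it would be a cycle of \<pi>. *)

lemma trancl_Un_rank_strict_or_trancl:
  fixes f :: "'a \<Rightarrow> 'b::linorder"
  assumes H_mono: "\<forall>(x, y) \<in> H. f x \<le> f y"
    and F_strict: "\<forall>(x, y) \<in> F. f x < f y"
    and "(a, b) \<in> (H \<union> F)\<^sup>+"
  shows "f a \<le> f b \<and> (f a < f b \<or> (a, b) \<in> H\<^sup>+)"
  using assms(3)
proof (induction rule: trancl_induct)
  case (base y)
  then show ?case using H_mono F_strict by auto
next
  case (step y z)
  from step.hyps(2) have "(y, z) \<in> H \<and> f y \<le> f z \<or> f y < f z"
    using H_mono F_strict by auto
  with step.IH show ?case by (auto intro: trancl_into_trancl)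
qed

lemma acyclic_Un_rank_increasing:
  fixes f :: "'a \<Rightarrow> 'b::linorder"
  assumes "acyclic H"
    and "\<forall>(x, y) \<in> H. f x \<le> f y"
    and "\<forall>(x, y) \<in> F. f x < f y"
  shows "acyclic (H \<union> F)"
  using assms trancl_Un_rank_strict_or_trancl[OF assms(2,3)]
  unfolding acyclic_def by blast

lemma time_respecting_iff: "time_respecting H \<longleftrightarrow> (\<forall>(x, y) \<in> H. snd x \<le> snd y)"
  unfolding time_respecting_def by auto

lemma reduction_Un: "reduction (H \<union> H') = reduction H \<union> reduction H'"
  unfolding reduction_def by auto

lemma SCG_subset_Times:
  assumes "is_SCG V Gs"
  shows "Gs \<subseteq> V \<times> V"
  using assms unfolding is_SCG_def is_FTCG_def graph_on_Vf_def reduction_def by blast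

definition unit_lag_edges :: "('v \<times> 'v) set \<Rightarrow> (('v \<times> int) \<times> ('v \<times> int)) set" where
  "unit_lag_edges Gs = {((X, 0), (Z, 1)) | X Z. (X, Z) \<in> Gs}"

lemma reduction_unit_lag_edges: "reduction (unit_lag_edges Gs) = Gs"
proof
  show "reduction (unit_lag_edges Gs) \<subseteq> Gs"
    unfolding reduction_def unit_lag_edges_def by auto
  show "Gs \<subseteq> reduction (unit_lag_edges Gs)"
  proof clarify
    fix X Z assume "(X, Z) \<in> Gs"
    then have "((X, 1 - 1), (Z, 1)) \<in> unit_lag_edges Gs"
      unfolding unit_lag_edges_def by auto
    then show "(X, Z) \<in> reduction (unit_lag_edges Gs)"
      unfolding reduction_def by (auto intro!: exI[of _ 1])
  qed
qed

lemma unit_lag_edges_strict: "\<forall>(x, y) \<in> unit_lag_edges Gs. snd x < snd y"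
  unfolding unit_lag_edges_def by auto

lemma graph_on_Vf_unit_lag_edges:
  assumes "Gs \<subseteq> V \<times> V"
  shows "graph_on_Vf V (unit_lag_edges Gs)"
  using assms unfolding graph_on_Vf_def unit_lag_edges_def by blast

theorem lemma5:
  fixes V :: "'v set" and Gs :: "('v \<times> 'v) set"
    and \<pi> :: "(('v \<times> int) \<times> ('v \<times> int)) set"
  assumes "finite V"
    and "is_SCG V Gs"
    and "graph_on_Vf V \<pi>"
    and "acyclic \<pi>"
    and "time_respecting \<pi>"
    and "reduction \<pi> \<subseteq> Gs"
  shows "\<exists>G \<in> FTCG_class V Gs. \<pi> \<subseteq> G"
proof -
  let ?G = "\<pi> \<union> unit_lag_edges Gs"
  have "graph_on_Vf V ?G"
    using assms(3) graph_on_Vf_unit_lag_edges[OF SCG_subset_Times[OF assms(2)]]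
    unfolding graph_on_Vf_def by blast
  moreover have "acyclic ?G"
    using acyclic_Un_rank_increasing[OF assms(4) _ unit_lag_edges_strict] assms(5)
    unfolding time_respecting_iff by blast
  moreover have "time_respecting ?G"
    using assms(5) unit_lag_edges_strict unfolding time_respecting_iff by fastforce
  moreover have "reduction ?G = Gs"
    using assms(6) by (auto simp: reduction_Un reduction_unit_lag_edges)
  ultimately have "?G \<in> FTCG_class V Gs"
    unfolding FTCG_class_def is_FTCG_def by blast
  then show ?thesis by blast
qed

end
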